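(* Let $\mathcal E$ be a nest on a complex Banach space $X$ and let $\mathcal J$ be a $\mathcal T(\mathcal E)$-bimodule. Then $(\Phi_{\mathcal J},\Phi^e_{\mathcal J})$ is an admissible support function pair on $\mathcal E$.
   Context: A nest $\mathcal E$ on $X$ is a family of closed linear subspaces of $X$, totally ordered by inclusion, containing $\{0\}$ and $X$, closed under arbitrary meets $\wedge$ (intersections) and joins $\vee$ (norm-closed linear spans of unions). For $E\in\mathcal E$, $E_-=\vee\{F\in\mathcal E: F\subsetneq E\}$ and $E_+=\wedge\{F\in\mathcal E: E\subsetneq F\}$. $\mathcal T(\mathcal E)=\{T\in\mathcal B(X): TE\subseteq E\ \forall E\in\mathcal E\}$; a $\mathcal T(\mathcal E)$-bimodule is a linear subspace $\mathcal J\subseteq\mathcal B(X)$ with $\mathcal T(\mathcal E)\mathcal J,\mathcal J\mathcal T(\mathcal E)\subseteq\mathcal J$. For subspaces $M,L$ ($L$ closed), $M/L=\{m+L:m\in M\}$ and $\dim(M/L)$ is its dimension. A support function is an inclusion-preserving map $\mathcal E\to\mathcal E$; it is admissible if for all $N\neq\{0\}$, $\vee_{E\subsetneq N}\Phi(E)=\Phi(N_-)$. $\Phi\le\Theta$ means $\Phi(E)\subseteq\Theta(E)$ for all $E$. $\mathcal E_f=\{N\in\mathcal E: 0<\dim(N/N_-)<\infty\}$. An essential support function is a support function $\Psi$ such that for all $N,N_1,N_2\in\mathcal E$ with $N_1\subseteq N_2$: (a) $\Psi(N)\in\mathcal E_f\Rightarrow\Psi(N)=\Psi(N)_+$; (b)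 $\dim(N_2/N_1)<\infty\Rightarrow\Psi(N_2)=\Psi(N_1)$. A support function pair is a pair $(\Phi,\Psi)$ with $\Phi$ admissible, $\Phi(\{0\})=\{0\}$, $\Psi$ an essential support function and $\Psi\le\Phi$; it is admissible if moreover $\Psi(N)\in\mathcal E_f\Rightarrow\Psi(N)\subsetneq\Phi(N)$ for all $N\in\mathcal E$. For a bimodule $\mathcal J$: $\Phi_{\mathcal J}(E)=[\mathcal JE]$ (norm-closed linear span of $\{Tx:T\in\mathcal J,x\in E\}$), and $\Phi^e_{\mathcal J}(N)=\wedge\{L\in\mathcal E: \dim(TN/L)<\infty\ \forall T\in\mathcal J\}$. *)

theory Defs
  imports "HOL-Analysis.Analysis" "HOL-Library.Extended_Nat"
begin

text \<open>A complex Banach space is modelled as a real Banach space (type class banach)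
  together with a complex scalar multiplication sc extending the real one
  and compatible with the norm.\<close>

definition complex_structure :: "(complex \<Rightarrow> 'a::banach \<Rightarrow> 'a) \<Rightarrow> bool" where
  "complex_structure sc \<longleftrightarrow>
     (\<forall>r x. sc (complex_of_real r) x = r *\<^sub>R x) \<and>
     (\<forall>a x y. sc a (x + y) = sc a x + sc a y) \<and>
     (\<forall>a b x. sc (a + b) x = sc a x + sc b x) \<and>
     (\<forall>a b x. sc a (sc b x) = sc (a * b) x) \<and>
     (\<forall>x. sc 1 x = x) \<and>
     (\<forall>a x. norm (sc a x) = cmod a * norm x)"

definition csubspace :: "(complex \<Rightarrow> 'a::banach \<Rightarrow> 'a) \<Rightarrow> 'a set \<Rightarrow> bool" where
  "csubspace sc V \<longleftrightarrow> subspace V \<and> (\<forall>c x. x \<in> V \<longrightarrow> sc c x \<in> V)"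

definition cspan :: "(complex \<Rightarrow> 'a::banach \<Rightarrow> 'a) \<Rightarrow> 'a set \<Rightarrow> 'a set" where
  "cspan sc A = \<Inter>{V. csubspace sc V \<and> A \<subseteq> V}"

definition join :: "(complex \<Rightarrow> 'a::banach \<Rightarrow> 'a) \<Rightarrow> 'a set set \<Rightarrow> 'a set" where
  "join sc S = closure (cspan sc (\<Union>S))"

definition bounded_clinear_op :: "(complex \<Rightarrow> 'a::banach \<Rightarrow> 'a) \<Rightarrow> ('a \<Rightarrow> 'a) \<Rightarrow> bool" where
  "bounded_clinear_op sc T \<longleftrightarrow> bounded_linear T \<and> (\<forall>c x. T (sc c x) = sc c (T x))"

definition nest :: "(complex \<Rightarrow> 'a::banach \<Rightarrow> 'a) \<Rightarrow> 'a set set \<Rightarrow> bool" where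
  "nest sc \<E> \<longleftrightarrow>
     (\<forall>E\<in>\<E>. closed E \<and> csubspace sc E) \<and>
     (\<forall>E\<in>\<E>. \<forall>F\<in>\<E>. E \<subseteq> F \<or> F \<subseteq> E) \<and>
     {0} \<in> \<E> \<and> UNIV \<in> \<E> \<and>
     (\<forall>S. S \<subseteq> \<E> \<longrightarrow> \<Inter>S \<in> \<E>) \<and>
     (\<forall>S. S \<subseteq> \<E> \<longrightarrow> join sc S \<in> \<E>)"

definition minus_elem :: "(complex \<Rightarrow> 'a::banach \<Rightarrow> 'a) \<Rightarrow> 'a set set \<Rightarrow> 'a set \<Rightarrow> 'a set" where
  "minus_elem sc \<E> E = join sc {F\<in>\<E>. F \<subset> E}"

definition plus_elem :: "'a set set \<Rightarrow> 'a set \<Rightarrow> 'a set" where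
  "plus_elem \<E> E = \<Inter>{F\<in>\<E>. E \<subset> F}"

text \<open>Dimension of M/L = {m + L : m \<in> M} (L a closed subspace): the least number of
  vectors of M whose classes span M/L, i.e. the least card F, F \<subseteq> M finite,
  with M \<subseteq> cspan (F \<union> L); infinite if no such finite F exists.\<close>
definition qdim :: "(complex \<Rightarrow> 'a::banach \<Rightarrow> 'a) \<Rightarrow> 'a set \<Rightarrow> 'a set \<Rightarrow> enat" where
  "qdim sc M L =
     (if \<exists>F. finite F \<and> F \<subseteq> M \<and> M \<subseteq> cspan sc (F \<union> L)
      then enat (LEAST n. \<exists>F. finite F \<and> F \<subseteq> M \<and> M \<subseteq> cspan sc (F \<union> L) \<and> card F = n)
      else \<infinity>)"

definition nest_alg :: "(complex \<Rightarrow> 'a::banach \<Rightarrow> 'a) \<Rightarrow> 'a set set \<Rightarrow> ('a \<Rightarrow> 'a) set" where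
  "nest_alg sc \<E> = {T. bounded_clinear_op sc T \<and> (\<forall>E\<in>\<E>. T ` E \<subseteq> E)}"

definition bimodule :: "(complex \<Rightarrow> 'a::banach \<Rightarrow> 'a) \<Rightarrow> 'a set set \<Rightarrow> ('a \<Rightarrow> 'a) set \<Rightarrow> bool" where
  "bimodule sc \<E> J \<longleftrightarrow>
     J \<subseteq> {T. bounded_clinear_op sc T} \<and>
     (\<lambda>x. 0) \<in> J \<and>
     (\<forall>S\<in>J. \<forall>T\<in>J. (\<lambda>x. S x + T x) \<in> J) \<and>
     (\<forall>c. \<forall>T\<in>J. (\<lambda>x. sc c (T x)) \<in> J) \<and>
     (\<forall>A\<in>nest_alg sc \<E>. \<forall>T\<in>J. A \<circ> T \<in> J \<and> T \<circ> A \<in> J)"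

definition support_function :: "'a set set \<Rightarrow> ('a set \<Rightarrow> 'a set) \<Rightarrow> bool" where
  "support_function \<E> \<Phi> \<longleftrightarrow>
     (\<forall>E\<in>\<E>. \<Phi> E \<in> \<E>) \<and> (\<forall>E\<in>\<E>. \<forall>F\<in>\<E>. E \<subseteq> F \<longrightarrow> \<Phi> E \<subseteq> \<Phi> F)"

definition admissible_sf :: "(complex \<Rightarrow> 'a::banach \<Rightarrow> 'a) \<Rightarrow> 'a set set \<Rightarrow> ('a set \<Rightarrow> 'a set) \<Rightarrow> bool" where
  "admissible_sf sc \<E> \<Phi> \<longleftrightarrow> support_function \<E> \<Phi> \<and>
     (\<forall>N\<in>\<E>. N \<noteq> {0} \<longrightarrow> join sc (\<Phi> ` {E\<in>\<E>. E \<subset> N}) = \<Phi> (minus_elem sc \<E> N))"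

definition sf_le :: "'a set set \<Rightarrow> ('a set \<Rightarrow> 'a set) \<Rightarrow> ('a set \<Rightarrow> 'a set) \<Rightarrow> bool" where
  "sf_le \<E> \<Phi> \<Theta> \<longleftrightarrow> (\<forall>E\<in>\<E>. \<Phi> E \<subseteq> \<Theta> E)"

definition E_f :: "(complex \<Rightarrow> 'a::banach \<Rightarrow> 'a) \<Rightarrow> 'a set set \<Rightarrow> 'a set set" where
  "E_f sc \<E> = {N\<in>\<E>. 0 < qdim sc N (minus_elem sc \<E> N) \<and> qdim sc N (minus_elem sc \<E> N) < \<infinity>}"

definition essential_sf :: "(complex \<Rightarrow> 'a::banach \<Rightarrow> 'a) \<Rightarrow> 'a set set \<Rightarrow> ('a set \<Rightarrow> 'a set) \<Rightarrow> bool" where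
  "essential_sf sc \<E> \<Psi> \<longleftrightarrow> support_function \<E> \<Psi> \<and>
     (\<forall>N\<in>\<E>. \<Psi> N \<in> E_f sc \<E> \<longrightarrow> \<Psi> N = plus_elem \<E> (\<Psi> N)) \<and>
     (\<forall>N1\<in>\<E>. \<forall>N2\<in>\<E>. N1 \<subseteq> N2 \<longrightarrow> qdim sc N2 N1 < \<infinity> \<longrightarrow> \<Psi> N2 = \<Psi> N1)"

definition sf_pair :: "(complex \<Rightarrow> 'a::banach \<Rightarrow> 'a) \<Rightarrow> 'a set set \<Rightarrow> ('a set \<Rightarrow> 'a set) \<Rightarrow> ('a set \<Rightarrow> 'a set) \<Rightarrow> bool" where
  "sf_pair sc \<E> \<Phi> \<Psi> \<longleftrightarrow> admissible_sf sc \<E> \<Phi> \<and> \<Phi> {0} = {0} \<and> essential_sf sc \<E> \<Psi> \<and> sf_le \<E> \<Psi> \<Phi>"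

definition admissible_sf_pair :: "(complex \<Rightarrow> 'a::banach \<Rightarrow> 'a) \<Rightarrow> 'a set set \<Rightarrow> ('a set \<Rightarrow> 'a set) \<Rightarrow> ('a set \<Rightarrow> 'a set) \<Rightarrow> bool" where
  "admissible_sf_pair sc \<E> \<Phi> \<Psi> \<longleftrightarrow> sf_pair sc \<E> \<Phi> \<Psi> \<and>
     (\<forall>N\<in>\<E>. \<Psi> N \<in> E_f sc \<E> \<longrightarrow> \<Psi> N \<subset> \<Phi> N)"

definition Phi_J :: "(complex \<Rightarrow> 'a::banach \<Rightarrow> 'a) \<Rightarrow> ('a \<Rightarrow> 'a) set \<Rightarrow> 'a set \<Rightarrow> 'a set" where
  "Phi_J sc J E = closure (cspan sc {T x | T x. T \<in> J \<and> x \<in> E})"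

definition Phi_e_J :: "(complex \<Rightarrow> 'a::banach \<Rightarrow> 'a) \<Rightarrow> 'a set set \<Rightarrow> ('a \<Rightarrow> 'a) set \<Rightarrow> 'a set \<Rightarrow> 'a set" where
  "Phi_e_J sc \<E> J N = \<Inter>{L\<in>\<E>. \<forall>T\<in>J. qdim sc (T ` N) L < \<infinity>}"

end

theory Submission
  imports Defs
begin

text \<open>
Every A \<in> T(\<E>) maps [J E] into itself, because A J \<subseteq> J.  Nests are reflexive: a closed
subspace M invariant under T(\<E>) lies in \<E>, since for F \<in> \<E> and x \<in> M \<setminus> F the
rank-one operators z \<mapsto> f(z) y, with f a functional vanishing on F (Hahn--Banach), belong
to T(\<E>) whenever y lies in every element of \<E> not contained in F; comparing M with the
least K \<in> \<E> containing M and with K_- then forces M = K.  Hence \<Phi>_J maps into \<E>, and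
admissibility follows because each T \<in> J is continuous and linear.

\<Phi>^e_J(N) is the meet of the family of those L \<in> \<E> modulo which every T N is
finite-dimensional.  Finite codimension is transitive and preserved by operators, so a
finite-dimensional enlargement of N does not change the family, and with L \<in> \<E>_f also
L_- belongs to the family.  Therefore the meet is never an element of \<E>_f lying in the family;
this gives \<Phi>^e_J(N) = \<Phi>^e_J(N)_+ when \<Phi>^e_J(N) \<in> \<E>_f, and, since \<Phi>_J(N) belongs to
the family, the strict inclusion \<Phi>^e_J(N) \<subset> \<Phi>_J(N).
\<close>

section \<open>Hahn--Banach\<close>

definition sublinear :: "('a::real_vector \<Rightarrow> real) \<Rightarrow> bool" where
  "sublinear p \<longleftrightarrow>
     (\<forall>a b. p (a + b) \<le> p a + p b) \<and> (\<forall>t a. 0 < t \<longrightarrow> p (t *\<^sub>R a) = t * p a)"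

lemma sublinearD:
  assumes "sublinear p"
  shows sublinear_add: "p (a + b) \<le> p a + p b"
    and sublinear_scaleR: "0 < t \<Longrightarrow> p (t *\<^sub>R a) = t * p a"
  using assms unfolding sublinear_def by blast+

lemma sublinear_zero: "sublinear p \<Longrightarrow> p 0 = 0"
  using sublinear_scaleR[of p 2 0] by simp

lemma sublinear_neg_le: "sublinear p \<Longrightarrow> - p (- a) \<le> p a"
  using sublinear_add[of p a "- a"] sublinear_zero[of p] by simp

text \<open>Partial linear functionals dominated by p, represented by their graphs so that
  the union of a chain is again one.\<close>
definition dominated_linear_graph :: "('a::real_vector \<Rightarrow> real) \<Rightarrow> ('a \<times> real) set \<Rightarrow> bool" where
  "dominated_linear_graph p G \<longleftrightarrow>
     (\<forall>a u v. (a, u) \<in> G \<longrightarrow> (a, v) \<in> G \<longrightarrow> u = v) \<and>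
     (\<forall>a u b v. (a, u) \<in> G \<longrightarrow> (b, v) \<in> G \<longrightarrow> (a + b, u + v) \<in> G) \<and>
     (\<forall>a u r. (a, u) \<in> G \<longrightarrow> (r *\<^sub>R a, r * u) \<in> G) \<and>
     (\<forall>a u. (a, u) \<in> G \<longrightarrow> u \<le> p a)"

lemma dominated_linear_graphD:
  assumes "dominated_linear_graph p G"
  shows dominated_linear_graph_unique: "(a, u) \<in> G \<Longrightarrow> (a, v) \<in> G \<Longrightarrow> u = v"
    and dominated_linear_graph_add: "(a, u) \<in> G \<Longrightarrow> (b, v) \<in> G \<Longrightarrow> (a + b, u + v) \<in> G"
    and dominated_linear_graph_scaleR: "(a, u) \<in> G \<Longrightarrow> (r *\<^sub>R a, r * u) \<in> G"
    and dominated_linear_graph_le: "(a, u) \<in> G \<Longrightarrow> u \<le> p a"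
  using assms unfolding dominated_linear_graph_def by blast+

lemma dominated_linear_graph_line:
  assumes p: "sublinear p"
  shows "dominated_linear_graph p (range (\<lambda>t. (t *\<^sub>R x, t * p x)))"
    (is "dominated_linear_graph p ?L")
  unfolding dominated_linear_graph_def
proof (intro conjI allI impI)
  fix a u v assume "(a, u) \<in> ?L" "(a, v) \<in> ?L"
  then obtain t s where "a = t *\<^sub>R x" "u = t * p x" "a = s *\<^sub>R x" "v = s * p x"
    by blast
  then show "u = v"
    using sublinear_zero[OF p] by (cases "x = 0") auto
next
  fix a u b v assume "(a, u) \<in> ?L" "(b, v) \<in> ?L"
  then obtain t s where "a = t *\<^sub>R x" "u = t * p x" "b = s *\<^sub>R x" "v = s * p x"
    by blast
  then show "(a + b, u + v) \<in> ?L"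
    by (auto simp: image_iff algebra_simps intro!: exI[of _ "t + s"])
next
  fix a u r assume "(a, u) \<in> ?L"
  then obtain t where "a = t *\<^sub>R x" "u = t * p x"
    by blast
  then show "(r *\<^sub>R a, r * u) \<in> ?L"
    by (auto simp: image_iff intro!: exI[of _ "r * t"])
next
  fix a u assume "(a, u) \<in> ?L"
  then obtain t where a: "a = t *\<^sub>R x" and u: "u = t * p x"
    by blast
  consider "0 < t" | "t = 0" | "t < 0" by linarith
  then show "u \<le> p a"
  proof cases
    case 3
    have "t * p x \<le> t * - p (- x)"
      using sublinear_neg_le[OF p, of x] 3 by (intro mult_left_mono_neg) auto
    also have "\<dots> = p ((- t) *\<^sub>R (- x))"
      using sublinear_scaleR[OF p, of "- t" "- x"] 3 by simp
    finally show ?thesis using a u by simp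
  qed (use a u sublinear_zero[OF p] sublinear_scaleR[OF p] in auto)
qed

lemma dominated_linear_graph_chain_Union:
  assumes "\<And>G. G \<in> C \<Longrightarrow> dominated_linear_graph p G"
    and "\<And>G H. G \<in> C \<Longrightarrow> H \<in> C \<Longrightarrow> G \<subseteq> H \<or> H \<subseteq> G"
  shows "dominated_linear_graph p (\<Union>C)"
  unfolding dominated_linear_graph_def
proof (intro conjI allI impI)
  fix a u v assume "(a, u) \<in> \<Union>C" "(a, v) \<in> \<Union>C"
  then obtain G where "G \<in> C" "(a, u) \<in> G" "(a, v) \<in> G"
    using assms(2) by blast
  then show "u = v"
    using assms(1) dominated_linear_graph_unique by blast
next
  fix a u b v assume "(a, u) \<in> \<Union>C" "(b, v) \<in> \<Union>C"
  then obtain G where "G \<in> C" "(a, u) \<in> G" "(b, v) \<in> G"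
    using assms(2) by blast
  then show "(a + b, u + v) \<in> \<Union>C"
    using assms(1) dominated_linear_graph_add by blast
next
  fix a u r assume "(a, u) \<in> \<Union>C"
  then obtain G where "G \<in> C" "(a, u) \<in> G"
    by blast
  then show "(r *\<^sub>R a, r * u) \<in> \<Union>C"
    using assms(1) dominated_linear_graph_scaleR by blast
next
  fix a u assume "(a, u) \<in> \<Union>C"
  then obtain G where "G \<in> C" "(a, u) \<in> G"
    by blast
  then show "u \<le> p a"
    using assms(1) dominated_linear_graph_le by blast
qed

lemma dominated_linear_graph_extension_bounds:
  assumes p: "sublinear p" and G: "dominated_linear_graph p G" and "G \<noteq> {}"
  shows "\<exists>c. \<forall>a u. (a, u) \<in> G \<longrightarrow> u - p (a - z) \<le> c \<and> c \<le> p (a + z) - u"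
proof -
  define S where "S = {u - p (a - z) | a u. (a, u) \<in> G}"
  have below: "s \<le> p (b + z) - v" if "s \<in> S" "(b, v) \<in> G" for s b v
  proof -
    obtain a u where au: "(a, u) \<in> G" "s = u - p (a - z)" using \<open>s \<in> S\<close> unfolding S_def by blast
    have "u + v \<le> p (a + b)"
      using dominated_linear_graph_le[OF G dominated_linear_graph_add[OF G au(1) \<open>(b, v) \<in> G\<close>]] .
    also have "\<dots> \<le> p (a - z) + p (b + z)"
      using sublinear_add[OF p, of "a - z" "b + z"] by simp
    finally show ?thesis using au by simp
  qed
  obtain b v where "(b, v) \<in> G" using \<open>G \<noteq> {}\<close> by auto
  then have "S \<noteq> {}"
    unfolding S_def by blast
  have "bdd_above S"
    using below[OF _ \<open>(b, v) \<in> G\<close>] by (rule bdd_aboveI)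
  show ?thesis
  proof (intro exI allI impI conjI)
    fix a u assume "(a, u) \<in> G"
    then have "u - p (a - z) \<in> S"
      unfolding S_def by blast
    then show "u - p (a - z) \<le> Sup S"
      using \<open>bdd_above S\<close> by (rule cSup_upper)
    show "Sup S \<le> p (a + z) - u"
      using \<open>S \<noteq> {}\<close> below[OF _ \<open>(a, u) \<in> G\<close>] by (rule cSup_least)
  qed
qed

lemma dominated_linear_graph_adjoin:
  assumes p: "sublinear p" and G: "dominated_linear_graph p G"
    and z: "\<nexists>u. (z, u) \<in> G"
    and c: "\<And>a u. (a, u) \<in> G \<Longrightarrow> u - p (a - z) \<le> c \<and> c \<le> p (a + z) - u"
  shows "dominated_linear_graph p {(a + t *\<^sub>R z, u + t * c) | a u t. (a, u) \<in> G}"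
    (is "dominated_linear_graph p ?G'")
  unfolding dominated_linear_graph_def
proof (intro conjI allI impI)
  fix a v w assume "(a, v) \<in> ?G'" "(a, w) \<in> ?G'"
  then obtain a1 u1 t1 a2 u2 t2 where
    e: "(a1, u1) \<in> G" "a = a1 + t1 *\<^sub>R z" "v = u1 + t1 * c"
       "(a2, u2) \<in> G" "a = a2 + t2 *\<^sub>R z" "w = u2 + t2 * c"
    by blast
  have "t1 = t2"
  proof (rule ccontr)
    assume "t1 \<noteq> t2"
    have "(a2 - a1, u2 - u1) \<in> G"
      using dominated_linear_graph_add[OF G e(4) dominated_linear_graph_scaleR[OF G e(1), of "- 1"]]
      by simp
    then have "((1 / (t1 - t2)) *\<^sub>R (a2 - a1), (1 / (t1 - t2)) * (u2 - u1)) \<in> G"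
      by (rule dominated_linear_graph_scaleR[OF G])
    moreover have "a2 - a1 = (t1 - t2) *\<^sub>R z"
      using e(2,5) by (simp add: algebra_simps)
    ultimately show False using z \<open>t1 \<noteq> t2\<close> by auto
  qed
  then show "v = w"
    using e dominated_linear_graph_unique[OF G] by auto
next
  fix a v b w assume "(a, v) \<in> ?G'" "(b, w) \<in> ?G'"
  then obtain a1 u1 t1 a2 u2 t2 where
    e: "(a1, u1) \<in> G" "a = a1 + t1 *\<^sub>R z" "v = u1 + t1 * c"
       "(a2, u2) \<in> G" "b = a2 + t2 *\<^sub>R z" "w = u2 + t2 * c"
    by blast
  have "a + b = (a1 + a2) + (t1 + t2) *\<^sub>R z" "v + w = (u1 + u2) + (t1 + t2) * c"
    using e by (simp_all add: algebra_simps)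
  then show "(a + b, v + w) \<in> ?G'"
    using dominated_linear_graph_add[OF G e(1,4)] by blast
next
  fix a v r assume "(a, v) \<in> ?G'"
  then obtain a1 u1 t where e: "(a1, u1) \<in> G" "a = a1 + t *\<^sub>R z" "v = u1 + t * c"
    by blast
  have "r *\<^sub>R a = r *\<^sub>R a1 + (r * t) *\<^sub>R z" "r * v = r * u1 + (r * t) * c"
    using e by (simp_all add: algebra_simps)
  then show "(r *\<^sub>R a, r * v) \<in> ?G'"
    using dominated_linear_graph_scaleR[OF G e(1)] by blast
next
  fix a v assume "(a, v) \<in> ?G'"
  then obtain a1 u1 t where e: "(a1, u1) \<in> G" "a = a1 + t *\<^sub>R z" "v = u1 + t * c"
    by blast
  consider "t = 0" | "0 < t" | "t < 0" by linarith
  then show "v \<le> p a"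
  proof cases
    case 1
    then show ?thesis using e dominated_linear_graph_le[OF G] by simp
  next
    case 2
    have "c \<le> p ((1 / t) *\<^sub>R a1 + z) - (1 / t) * u1"
      using c[OF dominated_linear_graph_scaleR[OF G e(1)]] by blast
    then have "t * c \<le> t * p ((1 / t) *\<^sub>R a1 + z) - u1"
      using 2 by (simp add: field_simps)
    also have "t * p ((1 / t) *\<^sub>R a1 + z) = p a"
      using sublinear_scaleR[OF p 2, of "(1 / t) *\<^sub>R a1 + z"] 2 e(2)
      by (simp add: scaleR_add_right)
    finally show ?thesis using e by simp
  next
    case 3
    define s where "s = - t"
    have "0 < s" using 3 by (simp add: s_def)
    have "(1 / s) * u1 - p ((1 / s) *\<^sub>R a1 - z) \<le> c"
      using c[OF dominated_linear_graph_scaleR[OF G e(1)]] by blast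
    then have "u1 - s * p ((1 / s) *\<^sub>R a1 - z) \<le> s * c"
      using \<open>0 < s\<close> by (simp add: field_simps)
    moreover have "s * p ((1 / s) *\<^sub>R a1 - z) = p a"
      using sublinear_scaleR[OF p \<open>0 < s\<close>, of "(1 / s) *\<^sub>R a1 - z"] \<open>0 < s\<close> e(2)
      by (simp add: scaleR_diff_right s_def)
    ultimately show ?thesis using e by (simp add: s_def)
  qed
qed

lemma dominated_linear_graph_maximal_total:
  assumes p: "sublinear p" and M: "dominated_linear_graph p M" "M \<noteq> {}"
    and maximal: "\<And>G. dominated_linear_graph p G \<Longrightarrow> M \<subseteq> G \<Longrightarrow> G = M"
  shows "\<exists>u. (z, u) \<in> M"
proof (rule ccontr)
  assume z: "\<nexists>u. (z, u) \<in> M"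
  obtain c where c: "\<And>a u. (a, u) \<in> M \<Longrightarrow> u - p (a - z) \<le> c \<and> c \<le> p (a + z) - u"
    using dominated_linear_graph_extension_bounds[OF p M] by blast
  define G where "G = {(a + t *\<^sub>R z, u + t * c) | a u t. (a, u) \<in> M}"
  have "M \<subseteq> G"
    unfolding G_def by force
  moreover have "dominated_linear_graph p G"
    unfolding G_def by (rule dominated_linear_graph_adjoin[OF p M(1) z c])
  ultimately have "G = M"
    by (rule maximal[rotated])
  obtain a u where "(a, u) \<in> M"
    using M(2) by auto
  then have "(0, 0) \<in> M"
    using dominated_linear_graph_scaleR[OF M(1), of a u 0] by simp
  then have "(0 + 1 *\<^sub>R z, 0 + 1 * c) \<in> G"
    unfolding G_def by blast
  with \<open>G = M\<close> z show False
    by simp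
qed

lemma dominated_linear_graph_total_linear:
  assumes M: "dominated_linear_graph p M" and total: "\<And>z. \<exists>u. (z, u) \<in> M"
  shows "\<exists>g. linear g \<and> (\<forall>a. g a \<le> p a) \<and> (\<forall>a u. (a, u) \<in> M \<longrightarrow> u = g a)"
proof -
  define g where "g z = (THE u. (z, u) \<in> M)" for z
  have gM: "(z, g z) \<in> M" and g_unique: "(z, u) \<in> M \<Longrightarrow> u = g z" for z u
  proof -
    have "\<exists>!u. (z, u) \<in> M"
      using total[of z] dominated_linear_graph_unique[OF M] by blast
    then show "(z, g z) \<in> M"
      unfolding g_def by (rule theI')
    then show "(z, u) \<in> M \<Longrightarrow> u = g z"
      using dominated_linear_graph_unique[OF M] by blast
  qed
  have "linear g"
  proof (rule linearI)
    show "g (a + b) = g a + g b" for a b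
      using g_unique[OF dominated_linear_graph_add[OF M gM gM]] by simp
    show "g (r *\<^sub>R a) = r *\<^sub>R g a" for r a
      using g_unique[OF dominated_linear_graph_scaleR[OF M gM]] by simp
  qed
  moreover have "g a \<le> p a" for a
    using dominated_linear_graph_le[OF M gM] .
  ultimately show ?thesis
    using g_unique by blast
qed

theorem hahn_banach_sublinear:
  assumes p: "sublinear p"
  shows "\<exists>g. linear g \<and> (\<forall>a. g a \<le> p a) \<and> g x = p x"
proof -
  define L where "L = range (\<lambda>t. (t *\<^sub>R x, t * p x))"
  let ?A = "{G. dominated_linear_graph p G \<and> L \<subseteq> G}"
  have "\<exists>M\<in>?A. \<forall>G\<in>?A. M \<subseteq> G \<longrightarrow> G = M"
  proof (rule subset_Zorn_nonempty)
    show "?A \<noteq> {}"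
      using dominated_linear_graph_line[OF p] unfolding L_def by blast
  next
    fix C assume "C \<noteq> {}" "subset.chain ?A C"
    then have "dominated_linear_graph p (\<Union>C)"
      by (intro dominated_linear_graph_chain_Union) (auto simp: subset_chain_def)
    then show "\<Union>C \<in> ?A"
      using \<open>C \<noteq> {}\<close> \<open>subset.chain ?A C\<close> unfolding subset_chain_def by blast
  qed
  then obtain M where "M \<in> ?A" and maximal: "\<forall>G\<in>?A. M \<subseteq> G \<longrightarrow> G = M" ..
  then have M: "dominated_linear_graph p M" "L \<subseteq> M"
    by auto
  have x: "(x, p x) \<in> M"
    using M(2) unfolding L_def by (force intro: image_eqI[of _ _ 1])
  have "M \<noteq> {}"
    using x by blast
  moreover have "G = M" if "dominated_linear_graph p G" "M \<subseteq> G" for G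
    using maximal that M(2) by auto
  ultimately have "\<exists>u. (z, u) \<in> M" for z
    by (rule dominated_linear_graph_maximal_total[OF p M(1)])
  then obtain g where "linear g" "\<forall>a. g a \<le> p a" "\<forall>a u. (a, u) \<in> M \<longrightarrow> u = g a"
    using dominated_linear_graph_total_linear[OF M(1)] by blast
  moreover have "g x = p x"
    using x \<open>\<forall>a u. (a, u) \<in> M \<longrightarrow> u = g a\<close> by simp
  ultimately show ?thesis
    by blast
qed

lemma sublinear_infdist_subspace:
  fixes F :: "'a::real_normed_vector set"
  assumes F: "subspace F"
  shows "sublinear (\<lambda>z. infdist z F)"
proof -
  have ne: "F \<noteq> {}"
    using subspace_0[OF F] by blast
  have add: "infdist (a + b) F \<le> infdist a F + infdist b F" for a b
  proof -
    have "infdist (a + b) F - infdist b F \<le> dist a f" if "f \<in> F" for f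
    proof -
      have "infdist (a + b) F - dist b g \<le> dist a f" if "g \<in> F" for g
      proof -
        have "infdist (a + b) F \<le> dist (a + b) (f + g)"
          using subspace_add[OF F \<open>f \<in> F\<close> \<open>g \<in> F\<close>] by (rule infdist_le)
        also have "\<dots> \<le> dist a f + dist b g"
          by (rule dist_triangle_add)
        finally show ?thesis by simp
      qed
      then have "infdist (a + b) F - dist a f \<le> infdist b F"
        unfolding infdist_notempty[OF ne] by (intro cINF_greatest[OF ne]) (simp add: algebra_simps)
      then show ?thesis by simp
    qed
    then have "infdist (a + b) F - infdist b F \<le> infdist a F"
      unfolding infdist_notempty[OF ne] by (intro cINF_greatest[OF ne])
    then show ?thesis by simp
  qed
  have scale_le: "infdist (t *\<^sub>R a) F \<le> t * infdist a F" if "0 < t" for t a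
  proof -
    have "infdist (t *\<^sub>R a) F / t \<le> dist a f" if "f \<in> F" for f
    proof -
      have "infdist (t *\<^sub>R a) F \<le> dist (t *\<^sub>R a) (t *\<^sub>R f)"
        using subspace_scale[OF F \<open>f \<in> F\<close>] by (rule infdist_le)
      also have "\<dots> = t * dist a f"
        using \<open>0 < t\<close> by (simp add: dist_norm flip: scaleR_diff_right)
      finally show ?thesis
        using \<open>0 < t\<close> by (simp add: divide_simps mult.commute)
    qed
    then have "infdist (t *\<^sub>R a) F / t \<le> infdist a F"
      unfolding infdist_notempty[OF ne] by (intro cINF_greatest[OF ne])
    then show ?thesis
      using \<open>0 < t\<close> by (simp add: divide_simps mult.commute)
  qed
  have "infdist (t *\<^sub>R a) F = t * infdist a F" if "0 < t" for t a
    using scale_le[OF that, of a] scale_le[of "1 / t" "t *\<^sub>R a"] that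
    by (simp add: divide_simps mult.commute)
  with add show ?thesis
    unfolding sublinear_def by blast
qed

lemma separating_functional_closed_subspace:
  fixes F :: "'a::real_normed_vector set"
  assumes F: "subspace F" "closed F" and x: "x \<notin> F"
  shows "\<exists>g. linear g \<and> (\<forall>f\<in>F. g f = 0) \<and> g x \<noteq> 0 \<and> (\<forall>z. \<bar>g z\<bar> \<le> norm z)"
proof -
  obtain g where g: "linear g" "\<And>z. g z \<le> infdist z F" and gx: "g x = infdist x F"
    using hahn_banach_sublinear[OF sublinear_infdist_subspace[OF F(1)]] by blast
  have "0 \<in> F"
    using subspace_0[OF F(1)] .
  have bound: "g z \<le> norm z" for z
    using g(2)[of z] infdist_le[OF \<open>0 \<in> F\<close>, of z] by simp
  have "g (- z) = - g z" for z
    using linear_neg[OF g(1)] .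
  then have "\<bar>g z\<bar> \<le> norm z" for z
    using bound[of z] bound[of "- z"] by (simp add: abs_le_iff)
  moreover have "g f = 0" if "f \<in> F" for f
    using g(2)[of f] g(2)[of "- f"] \<open>g (- f) = - g f\<close> subspace_neg[OF F(1) that] that by simp
  moreover have "F \<noteq> {}"
    using \<open>0 \<in> F\<close> by blast
  then have "g x \<noteq> 0"
    using gx infdist_pos_not_in_closed[OF F(2) _ x] by simp
  ultimately show ?thesis
    using g(1) by blast
qed

section \<open>Complex subspaces and quotient dimension\<close>

lemma csubspaceD:
  assumes "csubspace sc V"
  shows csubspace_0: "0 \<in> V"
    and csubspace_add: "x \<in> V \<Longrightarrow> y \<in> V \<Longrightarrow> x + y \<in> V"
    and csubspace_diff: "x \<in> V \<Longrightarrow> y \<in> V \<Longrightarrow> x - y \<in> V"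
    and csubspace_sc: "x \<in> V \<Longrightarrow> sc c x \<in> V"
  using assms unfolding csubspace_def by (auto intro: subspace_0 subspace_add subspace_diff)

lemma cspan_csubspace: "csubspace sc (cspan sc A)"
  unfolding cspan_def csubspace_def subspace_def by blast

lemma cspan_superset: "A \<subseteq> cspan sc A"
  unfolding cspan_def by blast

lemma cspan_least: "csubspace sc V \<Longrightarrow> A \<subseteq> V \<Longrightarrow> cspan sc A \<subseteq> V"
  unfolding cspan_def by blast

lemma cspan_mono: "A \<subseteq> B \<Longrightarrow> cspan sc A \<subseteq> cspan sc B"
  by (meson cspan_csubspace cspan_least cspan_superset subset_trans)

lemma cspan_subset_cspan: "A \<subseteq> cspan sc B \<Longrightarrow> cspan sc A \<subseteq> cspan sc B"
  by (rule cspan_least[OF cspan_csubspace])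

lemma join_upper: "E \<in> S \<Longrightarrow> E \<subseteq> join sc S"
  unfolding join_def using cspan_superset closure_subset by blast

lemma join_least: "closed V \<Longrightarrow> csubspace sc V \<Longrightarrow> \<Union>S \<subseteq> V \<Longrightarrow> join sc S \<subseteq> V"
  unfolding join_def by (meson closure_minimal cspan_least)

lemma bounded_clinear_opD:
  assumes "bounded_clinear_op sc T"
  shows bounded_clinear_op_linear: "bounded_linear T"
    and bounded_clinear_op_sc: "T (sc c x) = sc c (T x)"
  using assms unfolding bounded_clinear_op_def by blast+

lemma vimage_csubspace:
  assumes "bounded_clinear_op sc T" "csubspace sc V"
  shows "csubspace sc (T -` V)"
proof -
  have "linear T"
    using bounded_clinear_op_linear[OF assms(1)] by (rule bounded_linear.linear)
  then show ?thesis
    using assms unfolding csubspace_def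
    by (auto simp: bounded_clinear_op_sc intro: linear_subspace_vimage)
qed

lemma vimage_closed_bounded_clinear_op:
  assumes "bounded_clinear_op sc T" "closed V"
  shows "closed (T -` V)"
  using bounded_clinear_op_linear[OF assms(1)] assms(2)
  by (intro continuous_closed_vimage linear_continuous_at) auto

lemma image_cspan_subset:
  assumes "bounded_clinear_op sc T"
  shows "T ` cspan sc A \<subseteq> cspan sc (T ` A)"
proof -
  have "cspan sc A \<subseteq> T -` cspan sc (T ` A)"
    by (rule cspan_least[OF vimage_csubspace[OF assms cspan_csubspace]])
      (use cspan_superset in blast)
  then show ?thesis
    by blast
qed

lemma qdim_eq_0: "M \<subseteq> L \<Longrightarrow> qdim sc M L = 0"
proof -
  assume "M \<subseteq> L"
  then have "finite {} \<and> {} \<subseteq> M \<and> M \<subseteq> cspan sc ({} \<union> L) \<and> card {} = 0"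
    using cspan_superset by auto
  then show ?thesis
    unfolding qdim_def by (auto simp: zero_enat_def intro!: Least_eq_0 exI[of _ "{}"])
qed

locale complex_banach =
  fixes sc :: "complex \<Rightarrow> 'a::banach \<Rightarrow> 'a"
  assumes complex_structure: "complex_structure sc"
begin

lemma
  shows sc_of_real: "sc (complex_of_real r) x = r *\<^sub>R x"
    and sc_add_right: "sc a (x + y) = sc a x + sc a y"
    and sc_add_left: "sc (a + b) x = sc a x + sc b x"
    and sc_sc: "sc a (sc b x) = sc (a * b) x"
    and sc_one: "sc 1 x = x"
    and norm_sc: "norm (sc a x) = cmod a * norm x"
  using complex_structure unfolding complex_structure_def by auto

lemma sc_zero_left: "sc 0 x = 0"
  using sc_of_real[of 0 x] by simp

lemma sc_scaleR_right: "sc a (r *\<^sub>R x) = r *\<^sub>R sc a x"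
  by (metis sc_of_real sc_sc mult.commute)

lemma bounded_linear_sc: "bounded_linear (sc a)"
  by (rule bounded_linear_intro[where K = "cmod a"])
    (auto simp: sc_add_right sc_scaleR_right norm_sc mult.commute)

lemma sc_zero_right: "sc a 0 = 0"
  using sc_scaleR_right[of a 0 0] by simp

lemma sc_Complex: "sc (Complex r s) x = r *\<^sub>R x + s *\<^sub>R sc \<i> x"
proof -
  have "Complex r s = complex_of_real r + complex_of_real s * \<i>"
    by (simp add: Complex_eq)
  then show ?thesis
    by (simp add: sc_add_left flip: sc_sc) (simp add: sc_of_real)
qed

lemma csubspaceI:
  assumes "0 \<in> V" "\<And>x y. x \<in> V \<Longrightarrow> y \<in> V \<Longrightarrow> x + y \<in> V" "\<And>c x. x \<in> V \<Longrightarrow> sc c x \<in> V"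
  shows "csubspace sc V"
  unfolding csubspace_def subspace_def using assms by (metis sc_of_real)

lemma csubspace_zero: "csubspace sc {0}"
  by (rule csubspaceI) (auto simp: sc_zero_right)

lemma csubspace_closure:
  assumes V: "csubspace sc V"
  shows "csubspace sc (closure V)"
proof (rule csubspaceI)
  show "0 \<in> closure V"
    using csubspace_0[OF V] closure_subset by blast
  have "closure V + closure V \<subseteq> closure V"
    using closure_sum[of V V] closure_mono[of "V + V" V] csubspace_add[OF V]
    by (auto simp: set_plus_def)
  then show "x + y \<in> closure V" if "x \<in> closure V" "y \<in> closure V" for x y
    using that set_plus_intro by blast
  have "sc c ` closure V \<subseteq> closure V" for c
    using closure_bounded_linear_image_subset[OF bounded_linear_sc, of c V]
      closure_mono[of "sc c ` V" V] csubspace_sc[OF V] by blast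
  then show "sc c x \<in> closure V" if "x \<in> closure V" for c x
    using that by blast
qed

lemma join_csubspace: "csubspace sc (join sc S)"
  unfolding join_def by (intro csubspace_closure cspan_csubspace)

lemma cspan_insert_subset: "cspan sc (insert h S) \<subseteq> {sc c h + w | c w. w \<in> cspan sc S}"
proof (rule cspan_least)
  let ?R = "{sc c h + w | c w. w \<in> cspan sc S}"
  have C: "csubspace sc (cspan sc S)"
    by (rule cspan_csubspace)
  show "csubspace sc ?R"
  proof (rule csubspaceI)
    show "0 \<in> ?R"
      using csubspace_0[OF C] sc_zero_left[of h] by force
  next
    fix x y assume "x \<in> ?R" "y \<in> ?R"
    then obtain c w d v where "x = sc c h + w" "w \<in> cspan sc S" "y = sc d h + v" "v \<in> cspan sc S"
      by blast
    then show "x + y \<in> ?R"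
      using csubspace_add[OF C, of w v]
      by (auto simp: sc_add_left algebra_simps intro!: exI[of _ "c + d"])
  next
    fix d x assume "x \<in> ?R"
    then obtain c w where "x = sc c h + w" "w \<in> cspan sc S"
      by blast
    then show "sc d x \<in> ?R"
      using csubspace_sc[OF C, of w d] by (auto simp: sc_add_right sc_sc)
  qed
  show "insert h S \<subseteq> ?R"
    using csubspace_0[OF C] cspan_superset[of S sc] sc_one[of h] sc_zero_left
    by (force intro: exI[of _ 1] exI[of _ 0])
qed

text \<open>The complex functional is recovered from its real part g as g z - i g(i z).\<close>
lemma complex_separating_functional:
  assumes F: "csubspace sc F" "closed F" and x: "x \<notin> F"
  shows "\<exists>f. (\<forall>a b. f (a + b) = f a + f b) \<and> (\<forall>c a. f (sc c a) = c * f a) \<and>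
    (\<forall>y\<in>F. f y = 0) \<and> f x \<noteq> 0 \<and> (\<forall>z. cmod (f z) \<le> 2 * norm z)"
proof -
  have "subspace F"
    using F(1) unfolding csubspace_def by blast
  then obtain g where g: "linear g" "\<And>y. y \<in> F \<Longrightarrow> g y = 0" "g x \<noteq> 0" "\<And>z. \<bar>g z\<bar> \<le> norm z"
    using separating_functional_closed_subspace[OF _ F(2) x] by blast
  define f where "f z = Complex (g z) (- g (sc \<i> z))" for z
  have g_sc: "g (sc (Complex r s) z) = r * g z + s * g (sc \<i> z)" for r s z
    using g(1) by (simp add: sc_Complex linear_add linear_scale)
  have "f (a + b) = f a + f b" for a b
    unfolding f_def using g(1) by (simp add: sc_add_right linear_add complex_eq_iff)
  moreover have "f (sc c a) = c * f a" for c a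
  proof (cases c)
    case (Complex r s)
    have "\<i> * c = Complex (- s) r"
      using Complex by (simp add: complex_eq_iff)
    then have i_c: "sc \<i> (sc c a) = sc (Complex (- s) r) a"
      by (simp add: sc_sc)
    show ?thesis
      unfolding f_def i_c unfolding Complex g_sc by (simp add: complex_eq_iff algebra_simps)
  qed
  moreover have "f y = 0" if "y \<in> F" for y
    unfolding f_def using g(2) that csubspace_sc[OF F(1) that] by (simp add: complex_eq_iff)
  moreover have "f x \<noteq> 0"
    unfolding f_def using g(3) by (simp add: complex_eq_iff)
  moreover have "cmod (f z) \<le> 2 * norm z" for z
  proof -
    have "cmod (f z) \<le> \<bar>g z\<bar> + \<bar>g (sc \<i> z)\<bar>"
      unfolding f_def using cmod_le[of "Complex (g z) (- g (sc \<i> z))"] by simp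
    also have "\<dots> \<le> norm z + norm (sc \<i> z)"
      using g(4)[of z] g(4)[of "sc \<i> z"] by (rule add_mono)
    finally show ?thesis
      by (simp add: norm_sc)
  qed
  ultimately show ?thesis
    by blast
qed

lemma finite_spanning_subset:
  assumes "finite H" "M \<subseteq> cspan sc (H \<union> L)"
  shows "\<exists>F. finite F \<and> F \<subseteq> M \<and> M \<subseteq> cspan sc (F \<union> L)"
  using assms
proof (induction H arbitrary: L rule: finite_induct)
  case empty
  then show ?case by blast
next
  case (insert h H L)
  show ?case
  proof (cases "M \<subseteq> cspan sc (H \<union> L)")
    case True
    then show ?thesis by (rule insert.IH)
  next
    case False
    then obtain m where m: "m \<in> M" "m \<notin> cspan sc (H \<union> L)"
      by blast
    then have "m \<in> cspan sc (insert h (H \<union> L))"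
      using insert.prems by auto
    then have "m \<in> {sc c h + w | c w. w \<in> cspan sc (H \<union> L)}"
      by (rule subsetD[OF cspan_insert_subset])
    then obtain c w where cw: "m = sc c h + w" "w \<in> cspan sc (H \<union> L)"
      by blast
    have "c \<noteq> 0"
    proof
      assume "c = 0"
      then have "m = w"
        using cw(1) by (simp add: sc_zero_left)
      then show False
        using m(2) cw(2) by simp
    qed
    let ?S = "cspan sc (H \<union> insert m L)"
    have S: "H \<union> insert m L \<subseteq> ?S"
      by (rule cspan_superset)
    then have "cspan sc (H \<union> L) \<subseteq> ?S"
      by (intro cspan_subset_cspan) blast
    then have "w \<in> ?S" "m \<in> ?S"
      using cw(2) S by blast+
    then have "sc (1 / c) (m - w) \<in> ?S"
      by (intro csubspace_sc[OF cspan_csubspace] csubspace_diff[OF cspan_csubspace])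
    moreover have "sc (1 / c) (m - w) = h"
      using \<open>c \<noteq> 0\<close> by (simp add: cw sc_sc sc_one)
    ultimately have "insert h H \<union> L \<subseteq> ?S"
      using S by auto
    then have "cspan sc (insert h H \<union> L) \<subseteq> ?S"
      by (rule cspan_subset_cspan)
    then have "M \<subseteq> ?S"
      using insert.prems by (rule subset_trans[rotated])
    then have "\<exists>F. finite F \<and> F \<subseteq> M \<and> M \<subseteq> cspan sc (F \<union> insert m L)"
      by (rule insert.IH)
    then obtain F where F: "finite F" "F \<subseteq> M" "M \<subseteq> cspan sc (F \<union> insert m L)"
      by blast
    have "F \<union> insert m L = insert m F \<union> L"
      by blast
    then show ?thesis
      using F m(1) by (intro exI[of _ "insert m F"]) auto
  qed
qed

lemma qdim_finite_iff: "qdim sc M L < \<infinity> \<longleftrightarrow> (\<exists>H. finite H \<and> M \<subseteq> cspan sc (H \<union> L))"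
proof -
  have "qdim sc M L < \<infinity> \<longleftrightarrow> (\<exists>F. finite F \<and> F \<subseteq> M \<and> M \<subseteq> cspan sc (F \<union> L))"
    unfolding qdim_def by auto
  then show ?thesis
    using finite_spanning_subset by blast
qed

lemma qdim_finite_subset:
  assumes "M' \<subseteq> M" "qdim sc M L < \<infinity>"
  shows "qdim sc M' L < \<infinity>"
  using assms unfolding qdim_finite_iff by blast

lemma qdim_finite_trans:
  assumes "qdim sc M L < \<infinity>" "qdim sc L K < \<infinity>"
  shows "qdim sc M K < \<infinity>"
proof -
  obtain F G where "finite F" "M \<subseteq> cspan sc (F \<union> L)" "finite G" "L \<subseteq> cspan sc (G \<union> K)"
    using assms unfolding qdim_finite_iff by blast
  moreover have "cspan sc (G \<union> K) \<subseteq> cspan sc ((F \<union> G) \<union> K)"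
    by (rule cspan_mono) blast
  ultimately have "F \<union> L \<subseteq> cspan sc ((F \<union> G) \<union> K)"
    using cspan_superset[of "(F \<union> G) \<union> K" sc] by blast
  then have "M \<subseteq> cspan sc ((F \<union> G) \<union> K)"
    using \<open>M \<subseteq> cspan sc (F \<union> L)\<close> cspan_subset_cspan by blast
  then show ?thesis
    unfolding qdim_finite_iff using \<open>finite F\<close> \<open>finite G\<close> by blast
qed

lemma qdim_finite_image:
  assumes "bounded_clinear_op sc T" "qdim sc M L < \<infinity>"
  shows "qdim sc (T ` M) (T ` L) < \<infinity>"
proof -
  obtain H where "finite H" "M \<subseteq> cspan sc (H \<union> L)"
    using assms(2) unfolding qdim_finite_iff by blast
  then have "T ` M \<subseteq> cspan sc (T ` H \<union> T ` L)"
    using image_cspan_subset[OF assms(1), of "H \<union> L"] by (auto simp: image_Un)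
  then show ?thesis
    unfolding qdim_finite_iff using \<open>finite H\<close> by blast
qed

end

section \<open>Reflexivity of nests\<close>

locale complex_nest = complex_banach sc
  for sc :: "complex \<Rightarrow> 'a::banach \<Rightarrow> 'a" +
  fixes \<E> :: "'a set set"
  assumes nest: "nest sc \<E>"
begin

lemma
  shows nest_closed: "E \<in> \<E> \<Longrightarrow> closed E"
    and nest_csubspace: "E \<in> \<E> \<Longrightarrow> csubspace sc E"
    and nest_linear: "E \<in> \<E> \<Longrightarrow> F \<in> \<E> \<Longrightarrow> E \<subseteq> F \<or> F \<subseteq> E"
    and nest_Inter: "S \<subseteq> \<E> \<Longrightarrow> \<Inter>S \<in> \<E>"
    and nest_join: "S \<subseteq> \<E> \<Longrightarrow> join sc S \<in> \<E>"
  using nest unfolding nest_def by blast+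

lemma minus_elem_in_nest: "minus_elem sc \<E> E \<in> \<E>"
  unfolding minus_elem_def by (rule nest_join) blast

lemma nest_alg_rank_one:
  assumes F: "F \<in> \<E>" and x: "x \<notin> F" and y: "\<And>F'. F' \<in> \<E> \<Longrightarrow> \<not> F' \<subseteq> F \<Longrightarrow> y \<in> F'"
  shows "\<exists>A\<in>nest_alg sc \<E>. A x = y"
proof -
  obtain f where f_add: "\<And>a b. f (a + b) = f a + f b" and f_sc: "\<And>c a. f (sc c a) = c * f a"
    and f_F: "\<And>z. z \<in> F \<Longrightarrow> f z = 0" and f_x: "f x \<noteq> 0" and f_bound: "\<And>z. cmod (f z) \<le> 2 * norm z"
    using complex_separating_functional[OF nest_csubspace[OF F] nest_closed[OF F] x] by blast
  define A where "A z = sc (f z / f x) y" for z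
  have "bounded_linear A"
  proof (rule bounded_linear_intro[where K = "2 * norm y / cmod (f x)"])
    show "A (a + b) = A a + A b" for a b
      unfolding A_def by (simp add: f_add add_divide_distrib sc_add_left)
    show "A (r *\<^sub>R a) = r *\<^sub>R A a" for r a
      using f_sc[of "complex_of_real r" a] unfolding A_def by (simp add: sc_sc flip: sc_of_real)
    show "norm (A a) \<le> norm a * (2 * norm y / cmod (f x))" for a
    proof -
      have "norm (A a) = cmod (f a) / cmod (f x) * norm y"
        unfolding A_def by (simp add: norm_sc norm_divide)
      also have "\<dots> \<le> 2 * norm a / cmod (f x) * norm y"
        using f_bound[of a] by (intro mult_right_mono divide_right_mono) auto
      finally show ?thesis
        by (simp add: field_simps)
    qed
  qed
  moreover have "A (sc c z) = sc c (A z)" for c z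
    unfolding A_def by (simp add: f_sc sc_sc)
  moreover have "A ` E \<subseteq> E" if E: "E \<in> \<E>" for E
  proof (cases "E \<subseteq> F")
    case True
    then have "A z = 0" if "z \<in> E" for z
      unfolding A_def using f_F that by (auto simp: sc_zero_left)
    then show ?thesis
      using csubspace_0[OF nest_csubspace[OF E]] by auto
  next
    case False
    then show ?thesis
      unfolding A_def using y[OF E] csubspace_sc[OF nest_csubspace[OF E]] by auto
  qed
  ultimately have "A \<in> nest_alg sc \<E>"
    unfolding nest_alg_def bounded_clinear_op_def by blast
  moreover have "A x = y"
    unfolding A_def using f_x by (simp add: sc_one)
  ultimately show ?thesis
    by blast
qed

theorem nest_reflexive:
  assumes M: "closed M" "csubspace sc M"
    and invariant: "\<And>A. A \<in> nest_alg sc \<E> \<Longrightarrow> A ` M \<subseteq> M"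
  shows "M \<in> \<E>"
proof -
  have reach: "y \<in> M"
    if "F \<in> \<E>" "x \<in> M" "x \<notin> F" "\<And>F'. F' \<in> \<E> \<Longrightarrow> \<not> F' \<subseteq> F \<Longrightarrow> y \<in> F'" for F x y
    using nest_alg_rank_one[OF that(1,3,4)] invariant that(2) by blast
  define K where "K = \<Inter>{F\<in>\<E>. M \<subseteq> F}"
  have K: "K \<in> \<E>" "M \<subseteq> K"
    unfolding K_def by (auto intro: nest_Inter)
  have K_least: "K \<subseteq> F" if "F \<in> \<E>" "M \<subseteq> F" for F
    unfolding K_def using that by blast
  define K' where "K' = minus_elem sc \<E> K"
  have K': "K' \<in> \<E>"
    unfolding K'_def by (rule minus_elem_in_nest)
  have below_K: "F \<subseteq> K'" if "F \<in> \<E>" "F \<subset> K" for F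
    unfolding K'_def minus_elem_def using that by (intro join_upper) blast
  have "K \<subseteq> M"
  proof (cases "M \<subseteq> K'")
    case True
    have "F \<subseteq> M" if F: "F \<in> \<E>" "F \<subset> K" for F
    proof -
      obtain x where "x \<in> M" "x \<notin> F"
        using K_least[OF F(1)] F(2) by blast
      then show ?thesis
        using reach[OF F(1)] nest_linear[OF F(1)] by blast
    qed
    then have "K' \<subseteq> M"
      unfolding K'_def minus_elem_def using M by (intro join_least) blast+
    then show ?thesis
      using K_least[OF K' True] by blast
  next
    case False
    then obtain x where "x \<in> M" "x \<notin> K'"
      by blast
    have "y \<in> F'" if "y \<in> K" "F' \<in> \<E>" "\<not> F' \<subseteq> K'" for y F'
      using below_K[OF that(2)] nest_linear[OF that(2) K(1)] that by blast
    then show ?thesis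
      using reach[OF K' \<open>x \<in> M\<close> \<open>x \<notin> K'\<close>] by blast
  qed
  then show ?thesis
    using K by auto
qed

end

section \<open>The support functions of a bimodule\<close>

lemma Phi_J_closed: "closed (Phi_J sc J E)"
  unfolding Phi_J_def by simp

lemma Phi_J_upper:
  assumes "T \<in> J" "x \<in> E"
  shows "T x \<in> Phi_J sc J E"
proof -
  let ?S = "{T x | T x. T \<in> J \<and> x \<in> E}"
  have "T x \<in> ?S"
    using assms by blast
  then show ?thesis
    unfolding Phi_J_def using cspan_superset[of ?S sc] closure_subset[of "cspan sc ?S"] by blast
qed

lemma Phi_J_least:
  assumes "closed V" "csubspace sc V" "\<And>T x. T \<in> J \<Longrightarrow> x \<in> E \<Longrightarrow> T x \<in> V"
  shows "Phi_J sc J E \<subseteq> V"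
  unfolding Phi_J_def using assms by (intro closure_minimal cspan_least) blast+

lemma Phi_J_mono: "E \<subseteq> F \<Longrightarrow> Phi_J sc J E \<subseteq> Phi_J sc J F"
  unfolding Phi_J_def by (intro closure_mono cspan_mono) blast

lemma (in complex_banach) Phi_J_csubspace: "csubspace sc (Phi_J sc J E)"
  unfolding Phi_J_def by (intro csubspace_closure cspan_csubspace)

definition Phi_e_J_family :: "(complex \<Rightarrow> 'a::banach \<Rightarrow> 'a) \<Rightarrow> 'a set set \<Rightarrow> ('a \<Rightarrow> 'a) set \<Rightarrow> 'a set \<Rightarrow> 'a set set" where
  "Phi_e_J_family sc \<E> J N = {L\<in>\<E>. \<forall>T\<in>J. qdim sc (T ` N) L < \<infinity>}"

lemma Phi_e_J_eq_Inter: "Phi_e_J sc \<E> J N = \<Inter>(Phi_e_J_family sc \<E> J N)"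
  unfolding Phi_e_J_def Phi_e_J_family_def ..

lemma Phi_e_J_lower: "L \<in> Phi_e_J_family sc \<E> J N \<Longrightarrow> Phi_e_J sc \<E> J N \<subseteq> L"
  unfolding Phi_e_J_eq_Inter by blast

locale nest_bimodule = complex_nest sc \<E>
  for sc :: "complex \<Rightarrow> 'a::banach \<Rightarrow> 'a" and \<E> +
  fixes J :: "('a \<Rightarrow> 'a) set"
  assumes bimodule: "bimodule sc \<E> J"
begin

lemma bimodule_bounded_clinear_op: "T \<in> J \<Longrightarrow> bounded_clinear_op sc T"
  using bimodule unfolding bimodule_def by blast

lemma bimodule_comp_left: "A \<in> nest_alg sc \<E> \<Longrightarrow> T \<in> J \<Longrightarrow> A \<circ> T \<in> J"
  using bimodule unfolding bimodule_def by blast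

lemma Phi_J_in_nest: "Phi_J sc J E \<in> \<E>"
proof (rule nest_reflexive[OF Phi_J_closed Phi_J_csubspace])
  fix A assume A: "A \<in> nest_alg sc \<E>"
  then have A_op: "bounded_clinear_op sc A"
    unfolding nest_alg_def by blast
  have "Phi_J sc J E \<subseteq> A -` Phi_J sc J E"
  proof (rule Phi_J_least)
    show "T x \<in> A -` Phi_J sc J E" if "T \<in> J" "x \<in> E" for T x
      using Phi_J_upper[OF bimodule_comp_left[OF A \<open>T \<in> J\<close>] \<open>x \<in> E\<close>] by simp
  qed (use A_op Phi_J_closed Phi_J_csubspace in
        \<open>auto intro: vimage_closed_bounded_clinear_op vimage_csubspace\<close>)
  then show "A ` Phi_J sc J E \<subseteq> Phi_J sc J E"
    by blast
qed

lemma Phi_J_join: "join sc (Phi_J sc J ` {E\<in>\<E>. E \<subset> N}) = Phi_J sc J (minus_elem sc \<E> N)"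
proof
  have "Phi_J sc J E \<subseteq> Phi_J sc J (minus_elem sc \<E> N)" if "E \<in> \<E>" "E \<subset> N" for E
    using that unfolding minus_elem_def by (intro Phi_J_mono join_upper) blast
  then show "join sc (Phi_J sc J ` {E\<in>\<E>. E \<subset> N}) \<subseteq> Phi_J sc J (minus_elem sc \<E> N)"
    by (intro join_least Phi_J_closed Phi_J_csubspace) blast
next
  let ?R = "join sc (Phi_J sc J ` {E\<in>\<E>. E \<subset> N})"
  have R: "closed ?R" "csubspace sc ?R"
    by (simp add: join_def) (rule join_csubspace)
  show "Phi_J sc J (minus_elem sc \<E> N) \<subseteq> ?R"
  proof (rule Phi_J_least[OF R])
    fix T x assume T: "T \<in> J" and x: "x \<in> minus_elem sc \<E> N"
    have T_op: "bounded_clinear_op sc T"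
      using bimodule_bounded_clinear_op[OF T] .
    have "\<Union>{E\<in>\<E>. E \<subset> N} \<subseteq> T -` ?R"
      using Phi_J_upper[OF T] join_upper[of _ "Phi_J sc J ` {E\<in>\<E>. E \<subset> N}" sc] by blast
    then have "minus_elem sc \<E> N \<subseteq> T -` ?R"
      unfolding minus_elem_def
      by (intro join_least vimage_closed_bounded_clinear_op[OF T_op R(1)]
          vimage_csubspace[OF T_op R(2)])
    then show "T x \<in> ?R"
      using x by blast
  qed
qed

lemma admissible_Phi_J: "admissible_sf sc \<E> (Phi_J sc J)"
  unfolding admissible_sf_def support_function_def
  by (simp add: Phi_J_in_nest Phi_J_mono Phi_J_join)

lemma Phi_J_zero: "Phi_J sc J {0} = {0}"
proof
  have "T 0 = 0" if "T \<in> J" for T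
    using bounded_clinear_op_linear[OF bimodule_bounded_clinear_op[OF that]] by (rule linear_simps)
  then show "Phi_J sc J {0} \<subseteq> {0}"
    by (intro Phi_J_least csubspace_zero) auto
  show "{0} \<subseteq> Phi_J sc J {0}"
    using csubspace_0[OF Phi_J_csubspace] by blast
qed

lemma Phi_e_J_in_nest: "Phi_e_J sc \<E> J N \<in> \<E>"
  unfolding Phi_e_J_eq_Inter Phi_e_J_family_def by (rule nest_Inter) blast

lemma Phi_e_J_mono: "N \<subseteq> N' \<Longrightarrow> Phi_e_J sc \<E> J N \<subseteq> Phi_e_J sc \<E> J N'"
  unfolding Phi_e_J_eq_Inter Phi_e_J_family_def
  by (intro Inter_anti_mono) (blast intro: qdim_finite_subset[OF image_mono])

lemma Phi_J_in_family: "Phi_J sc J N \<in> Phi_e_J_family sc \<E> J N"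
proof -
  have "qdim sc (T ` N) (Phi_J sc J N) = 0" if "T \<in> J" for T
    using Phi_J_upper[OF that] by (intro qdim_eq_0) blast
  then show ?thesis
    unfolding Phi_e_J_family_def using Phi_J_in_nest by (simp add: zero_enat_def)
qed

lemma Phi_e_J_le_Phi_J: "Phi_e_J sc \<E> J N \<subseteq> Phi_J sc J N"
  by (rule Phi_e_J_lower[OF Phi_J_in_family])

lemma Phi_e_J_finite_extension:
  assumes "N1 \<subseteq> N2" "qdim sc N2 N1 < \<infinity>"
  shows "Phi_e_J sc \<E> J N2 = Phi_e_J sc \<E> J N1"
proof -
  have "Phi_e_J_family sc \<E> J N1 \<subseteq> Phi_e_J_family sc \<E> J N2"
    unfolding Phi_e_J_family_def
    using qdim_finite_trans[OF qdim_finite_image[OF bimodule_bounded_clinear_op assms(2)]] by blast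
  then have "Phi_e_J sc \<E> J N2 \<subseteq> Phi_e_J sc \<E> J N1"
    unfolding Phi_e_J_eq_Inter by (rule Inter_anti_mono)
  then show ?thesis
    using Phi_e_J_mono[OF assms(1)] by blast
qed

lemma Phi_e_J_neq_E_f:
  assumes L: "L \<in> Phi_e_J_family sc \<E> J N" "L \<in> E_f sc \<E>"
  shows "Phi_e_J sc \<E> J N \<noteq> L"
proof -
  let ?L' = "minus_elem sc \<E> L"
  have fin: "qdim sc L ?L' < \<infinity>" and pos: "0 < qdim sc L ?L'"
    using L(2) unfolding E_f_def by blast+
  have "?L' \<in> Phi_e_J_family sc \<E> J N"
    using L(1) qdim_finite_trans[OF _ fin] minus_elem_in_nest unfolding Phi_e_J_family_def by blast
  then have "Phi_e_J sc \<E> J N \<subseteq> ?L'"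
    by (rule Phi_e_J_lower)
  moreover have "\<not> L \<subseteq> ?L'"
    using qdim_eq_0[of L ?L' sc] pos by auto
  ultimately show ?thesis
    by blast
qed

lemma Phi_e_J_plus_elem:
  assumes "Phi_e_J sc \<E> J N \<in> E_f sc \<E>"
  shows "Phi_e_J sc \<E> J N = plus_elem \<E> (Phi_e_J sc \<E> J N)"
proof -
  let ?\<Psi> = "Phi_e_J sc \<E> J N"
  have "plus_elem \<E> ?\<Psi> \<subseteq> L" if L: "L \<in> Phi_e_J_family sc \<E> J N" for L
  proof -
    have "?\<Psi> \<subset> L"
      using Phi_e_J_lower[OF L] Phi_e_J_neq_E_f[OF L] assms by blast
    then show ?thesis
      using L unfolding plus_elem_def Phi_e_J_family_def by blast
  qed
  then have "plus_elem \<E> ?\<Psi> \<subseteq> \<Inter>(Phi_e_J_family sc \<E> J N)"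
    by (rule Inter_greatest)
  also have "\<dots> = ?\<Psi>"
    by (rule Phi_e_J_eq_Inter[symmetric])
  finally have "plus_elem \<E> ?\<Psi> \<subseteq> ?\<Psi>" .
  moreover have "?\<Psi> \<subseteq> plus_elem \<E> ?\<Psi>"
    unfolding plus_elem_def by (rule Inter_greatest) blast
  ultimately show ?thesis
    by (rule equalityI[rotated])
qed

lemma essential_sf_Phi_e_J: "essential_sf sc \<E> (Phi_e_J sc \<E> J)"
  unfolding essential_sf_def support_function_def
  by (intro conjI ballI impI Phi_e_J_in_nest Phi_e_J_mono Phi_e_J_plus_elem
      Phi_e_J_finite_extension)

lemma Phi_e_J_psubset_Phi_J:
  assumes "Phi_e_J sc \<E> J N \<in> E_f sc \<E>"
  shows "Phi_e_J sc \<E> J N \<subset> Phi_J sc J N"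
proof -
  have "Phi_e_J sc \<E> J N \<noteq> Phi_J sc J N"
  proof
    assume eq: "Phi_e_J sc \<E> J N = Phi_J sc J N"
    then have "Phi_J sc J N \<in> E_f sc \<E>"
      using assms by simp
    then have "Phi_e_J sc \<E> J N \<noteq> Phi_J sc J N"
      by (rule Phi_e_J_neq_E_f[OF Phi_J_in_family])
    with eq show False
      by contradiction
  qed
  with Phi_e_J_le_Phi_J show ?thesis
    by (rule psubsetI)
qed

end

theorem mainTheorem14:
  fixes sc :: "complex \<Rightarrow> 'a::banach \<Rightarrow> 'a"
    and \<E> :: "'a set set"
    and J :: "('a \<Rightarrow> 'a) set"
  assumes "complex_structure sc"
    and "nest sc \<E>"
    and "bimodule sc \<E> J"
  shows "admissible_sf_pair sc \<E> (Phi_J sc J) (Phi_e_J sc \<E> J)"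
proof -
  interpret nest_bimodule sc \<E> J
    by unfold_locales (fact assms)+
  show ?thesis
    unfolding admissible_sf_pair_def sf_pair_def sf_le_def
    by (intro conjI ballI impI admissible_Phi_J Phi_J_zero essential_sf_Phi_e_J
        Phi_e_J_le_Phi_J Phi_e_J_psubset_Phi_J)
qed

end
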